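(* Define $\mathrm{Mex}(F)=\min(\mathbb{N}_0\setminus F)$ for $F\subseteq\mathbb{N}_0$, and $a+D=\{a+d:d\in D\}$. Define triples $v(n)=(v_1(n),v_2(n),v_3(n))$, $n\ge 0$, recursively by $v(0)=(0,0,0)$ and, for $n\ge 0$, with $F_n=\{v_i(k): 0\le k\le n,\ i\in\{1,2,3\}\}$ and $D_n=\bigcup_{k=0}^{n}\{v_2(k)-v_1(k),\,v_3(k)-v_2(k),\,v_3(k)-v_1(k)\}$, \[ v_1(n+1)=\mathrm{Mex}(F_n),\quad v_2(n+1)=\mathrm{Mex}\big((v_1(n+1)+D_n)\cup\{1,\dots,v_1(n+1)\}\cup F_n\big), \] \[ v_3(n+1)=\mathrm{Mex}\big((v_2(n+1)+D_n)\cup\{1,\dots,v_2(n+1)\}\cup F_n\big). \] For a finite set $K=\{k_1<k_2<\dots<k_\ell\}\subseteq\mathbb{N}_0$ let $\mathrm{Gap}(K)=\min\{k_{i+1}-k_i: 1\le i\le \ell-1\}$ if $\ell\ge 2$ and $\mathrm{Gap}(K)=\infty$ if $\ell\le 1$. Then for every $n\ge 1$: (a) $v_i(n)-v_i(n-1)\ge i$ for $i=1,2,3$; (b) $v_3(n)-v_1(n)\ge v_3(n-1)-v_1(n-1)+2$; (c) $\mathrm{Gap}(D_{n-1}\cap[\mathrm{Mex}(D_{n-1}),\infty))\ge 2$; (d) $\mathrm{Gap}(F_{n-1}\cap[\mathrm{Mex}(F_{n-1})+\mathrm{Mex}(D_{n-1}),\infty))\ge 3$; (e) $\max F_n=v_3(n)=v_2(n)+\mathrm{Mex}(D_{n-1})$;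 (f) $\max D_n=v_3(n)-v_1(n)$.
   Context: $\mathbb{N}_0$ denotes the nonnegative integers. The triples $v(n)$ are the (sorted) P-positions of the 3D Wythoff $L^1$-Nim game. *)

theory Defs
  imports Main "HOL-Library.Extended_Nat"
begin

definition Mex :: "nat set \<Rightarrow> nat" where
  "Mex F = (LEAST m. m \<notin> F)"

definition plus_set :: "nat \<Rightarrow> nat set \<Rightarrow> nat set" where
  "plus_set a D = (\<lambda>d. a + d) ` D"

type_synonym triple = "nat \<times> nat \<times> nat"

definition c1 :: "triple \<Rightarrow> nat" where "c1 t = fst t"
definition c2 :: "triple \<Rightarrow> nat" where "c2 t = fst (snd t)"
definition c3 :: "triple \<Rightarrow> nat" where "c3 t = snd (snd t)"

definition Fset :: "triple list \<Rightarrow> nat set" where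
  "Fset vs = (\<Union>t\<in>set vs. {c1 t, c2 t, c3 t})"

definition Dset :: "triple list \<Rightarrow> nat set" where
  "Dset vs = (\<Union>t\<in>set vs. {c2 t - c1 t, c3 t - c2 t, c3 t - c1 t})"

definition next_triple :: "triple list \<Rightarrow> triple" where
  "next_triple vs =
     (let F = Fset vs; D = Dset vs;
          a = Mex F;
          b = Mex (plus_set a D \<union> {1..a} \<union> F);
          c = Mex (plus_set b D \<union> {1..b} \<union> F)
      in (a, b, c))"

fun vlist :: "nat \<Rightarrow> triple list" where
  "vlist 0 = [(0,0,0)]"
| "vlist (Suc n) = vlist n @ [next_triple (vlist n)]"

definition v :: "nat \<Rightarrow> triple" where "v n = vlist n ! n"
definition v1 :: "nat \<Rightarrow> nat" where "v1 n = c1 (v n)"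
definition v2 :: "nat \<Rightarrow> nat" where "v2 n = c2 (v n)"
definition v3 :: "nat \<Rightarrow> nat" where "v3 n = c3 (v n)"

definition F :: "nat \<Rightarrow> nat set" where
  "F n = {v1 k | k. k \<le> n} \<union> {v2 k | k. k \<le> n} \<union> {v3 k | k. k \<le> n}"

definition D :: "nat \<Rightarrow> nat set" where
  "D n = (\<Union>k\<in>{0..n}. {v2 k - v1 k, v3 k - v2 k, v3 k - v1 k})"

definition Gap :: "nat set \<Rightarrow> enat" where
  "Gap K = (let ks = sorted_list_of_set K in
     if length ks \<le> 1 then \<infinity>
     else enat (Min {ks ! (i+1) - ks ! i | i. i + 1 < length ks}))"

end

theory Submission
  imports Defs
begin

(* Carry along the recursion an invariant of the last triple (u1, u2, u3): u1 < Mex F,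
   u2 - u1 < Mex D, u3 - u2 \<le> u2 - u1, max F = u3, max D = u3 - u1, and the spacing
   properties (c), (d).  Write a = Mex F and \<delta> = Mex D.  Everything below a + \<delta> is blocked
   for the second coordinate, while above a + \<delta> the set F is 3-spaced and D is 2-spaced,
   so one of a + \<delta>, a + \<delta> + 1, a + \<delta> + 2 is free: b = a + d with \<delta> \<le> d \<le> \<delta> + 2.
   Since b + \<delta> exceeds max F, the third coordinate is c = b + \<delta>.  The new elements c and
   c - a exceed the old maxima of F and D by at least 3 and 2, so the spacing survives,
   while the new Mex values grow past a and d. *)

lemma Mex_notin: "finite S \<Longrightarrow> Mex S \<notin> S"
  unfolding Mex_def by (rule LeastI_ex) (meson ex_new_if_finite infinite_UNIV_nat)

lemma mem_of_less_Mex: "y < Mex S \<Longrightarrow> y \<in> S"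
  unfolding Mex_def using not_less_Least by blast

lemma Mex_eqI: "m \<notin> S \<Longrightarrow> (\<And>y. y < m \<Longrightarrow> y \<in> S) \<Longrightarrow> Mex S = m"
  unfolding Mex_def by (rule Least_equality) (auto simp: not_le[symmetric])

lemma less_MexI: "finite S \<Longrightarrow> (\<And>y. y \<le> m \<Longrightarrow> y \<in> S) \<Longrightarrow> m < Mex S"
  using Mex_notin by (metis not_less)

lemma mem_plus_set_iff: "y \<in> plus_set a S \<longleftrightarrow> a \<le> y \<and> y - a \<in> S"
  unfolding plus_set_def by force

definition spaced_above :: "nat \<Rightarrow> nat \<Rightarrow> nat set \<Rightarrow> bool" where
  "spaced_above g m S \<longleftrightarrow> (\<forall>x\<in>S. \<forall>y\<in>S. m \<le> x \<longrightarrow> x < y \<longrightarrow> x + g \<le> y)"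

lemma spaced_aboveD: "spaced_above g m S \<Longrightarrow> x \<in> S \<Longrightarrow> y \<in> S \<Longrightarrow> m \<le> x \<Longrightarrow> x < y \<Longrightarrow> x + g \<le> y"
  unfolding spaced_above_def by blast

lemma spaced_above_mono: "m \<le> m' \<Longrightarrow> spaced_above g m S \<Longrightarrow> spaced_above g m' S"
  unfolding spaced_above_def by auto

lemma spaced_above_insert_below: "x < m \<Longrightarrow> spaced_above g m (insert x S) \<longleftrightarrow> spaced_above g m S"
  unfolding spaced_above_def by auto

lemma spaced_above_insert_top:
  "spaced_above g m S \<Longrightarrow> (\<And>x. x \<in> S \<Longrightarrow> x + g \<le> t) \<Longrightarrow> spaced_above g m (insert t S)"
  unfolding spaced_above_def by fastforce

lemma Gap_geI:
  assumes "finite K" and spaced: "\<And>x y. x \<in> K \<Longrightarrow> y \<in> K \<Longrightarrow> x < y \<Longrightarrow> x + g \<le> y"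
  shows "enat g \<le> Gap K"
proof -
  define ks where "ks = sorted_list_of_set K"
  have sorted: "sorted_wrt (<) ks" and set_ks: "set ks = K"
    using \<open>finite K\<close> unfolding ks_def by simp_all
  define diffs where "diffs = {ks ! (i+1) - ks ! i | i. i + 1 < length ks}"
  have "g \<le> Min diffs" if "\<not> length ks \<le> 1"
  proof (rule Min.boundedI)
    show "finite diffs"
      unfolding diffs_def
      by (rule finite_subset[of _ "(\<lambda>i. ks!(i+1) - ks!i) ` {..<length ks}"]) auto
    show "diffs \<noteq> {}"
      using that unfolding diffs_def by (auto intro!: exI[of _ 0])
    fix z assume "z \<in> diffs"
    then obtain i where i: "i + 1 < length ks" "z = ks ! (i+1) - ks ! i"
      unfolding diffs_def by auto
    have "ks ! i < ks ! (i+1)"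
      using sorted i(1) by (simp add: sorted_wrt_iff_nth_less)
    moreover have "ks ! i \<in> K" "ks ! (i+1) \<in> K"
      using i(1) set_ks by auto
    ultimately show "g \<le> z" using spaced i(2) by fastforce
  qed
  then show ?thesis
    unfolding Gap_def Let_def ks_def[symmetric] diffs_def[symmetric] by simp
qed

lemma Gap_ge_if_spaced_above: "finite S \<Longrightarrow> spaced_above g m S \<Longrightarrow> enat g \<le> Gap (S \<inter> {m..})"
  by (rule Gap_geI) (auto simp: spaced_above_def)

lemma second_coordinate_bounds:
  fixes FF DD :: "nat set"
  assumes "finite FF" "finite DD" "0 < Mex DD"
    and spaced_D: "spaced_above 2 (Mex DD) DD" and spaced_F: "spaced_above 3 (a + Mex DD) FF"
    and a: "a = Mex FF" and b: "b = Mex (plus_set a DD \<union> {1..a} \<union> FF)"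
  shows "a + Mex DD \<le> b" "b \<le> a + Mex DD + 2" "\<And>x. Mex DD < x \<Longrightarrow> a + x < b \<Longrightarrow> x \<in> DD"
proof -
  define \<delta> S where "\<delta> = Mex DD" and "S = plus_set a DD \<union> {1..a} \<union> FF"
  have \<delta>_notin: "\<delta> \<notin> DD" using \<open>finite DD\<close> Mex_notin \<delta>_def by blast
  have b_S: "b = Mex S" using b S_def by simp
  have "finite S" using assms(1,2) unfolding S_def plus_set_def by simp
  then have b_notin: "b \<notin> S" using Mex_notin b_S by simp
  have below_b: "y \<in> S" if "y < b" for y
    using that mem_of_less_Mex[of y S] b_S by simp
  have shifted: "a + x \<in> S \<longleftrightarrow> x \<in> DD \<or> a + x \<in> FF" if "0 < x" for x
    using that by (auto simp: S_def mem_plus_set_iff)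
  have "y \<in> S" if "y < a + \<delta>" for y
  proof (cases "y < a")
    case True
    then show ?thesis using mem_of_less_Mex[of y FF] a S_def by simp
  next
    case False
    then show ?thesis
      using that mem_of_less_Mex[of "y - a" DD] \<delta>_def S_def by (simp add: mem_plus_set_iff)
  qed
  then show lower: "a + \<delta> \<le> b" using b_notin by (meson not_less)
  have a\<delta>_in_F: "a + \<delta> \<in> FF" if "a + \<delta> < b"
    using below_b[OF that] shifted[of \<delta>] \<delta>_notin assms(3) \<delta>_def by auto
  have F_free: "a + x \<notin> FF" if "a + \<delta> < b" "\<delta> < x" "x < \<delta> + 3" for x
    using spaced_aboveD[OF spaced_F a\<delta>_in_F[OF that(1)], of "a + x"] that \<delta>_def by auto
  show upper: "b \<le> a + \<delta> + 2"
  proof (rule ccontr)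
    assume "\<not> b \<le> a + \<delta> + 2"
    then have "\<delta> + 1 \<in> DD" "\<delta> + 2 \<in> DD"
      using below_b[of "a + (\<delta> + 1)"] below_b[of "a + (\<delta> + 2)"]
        shifted[of "\<delta> + 1"] shifted[of "\<delta> + 2"] F_free[of "\<delta> + 1"] F_free[of "\<delta> + 2"]
      by auto
    then show False using spaced_aboveD[OF spaced_D, of "\<delta> + 1" "\<delta> + 2"] \<delta>_def by simp
  qed
  show "x \<in> DD" if "\<delta> < x" "a + x < b" for x
    using that below_b[OF that(2)] shifted[of x] F_free[of x] upper by auto
qed

lemma third_coordinate_eq:
  assumes "finite DD" "0 < Mex DD" "0 \<in> FF" "b + Mex DD \<notin> FF"
  shows "Mex (plus_set b DD \<union> {1..b} \<union> FF) = b + Mex DD"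
proof (rule Mex_eqI)
  show "b + Mex DD \<notin> plus_set b DD \<union> {1..b} \<union> FF"
    using assms Mex_notin[of DD] by (auto simp: mem_plus_set_iff)
  show "y \<in> plus_set b DD \<union> {1..b} \<union> FF" if "y < b + Mex DD" for y
    using that assms(3) mem_of_less_Mex[of "y - b" DD]
    by (cases "y = 0"; cases "y \<le> b") (auto simp: mem_plus_set_iff)
qed

definition wythoff_inv :: "nat set \<Rightarrow> nat set \<Rightarrow> nat \<Rightarrow> nat \<Rightarrow> nat \<Rightarrow> bool" where
  "wythoff_inv FF DD u1 u2 u3 \<longleftrightarrow> finite FF \<and> finite DD \<and>
     u1 < Mex FF \<and> u1 \<le> u2 \<and> u2 - u1 < Mex DD \<and> u2 \<le> u3 \<and> u3 - u2 \<le> u2 - u1 \<and>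
     (\<forall>x\<in>FF. x \<le> u3) \<and> (\<forall>x\<in>DD. x \<le> u3 - u1) \<and>
     spaced_above 2 (Mex DD) DD \<and> spaced_above 3 (Mex FF + Mex DD) FF"

lemma next_triple_bounds:
  assumes inv: "wythoff_inv FF DD u1 u2 u3"
    and a: "a = Mex FF"
    and b: "b = Mex (plus_set a DD \<union> {1..a} \<union> FF)"
    and c: "c = Mex (plus_set b DD \<union> {1..b} \<union> FF)"
  shows "Mex DD \<le> b - a" "b - a \<le> Mex DD + 2" "\<And>x. Mex DD < x \<Longrightarrow> x < b - a \<Longrightarrow> x \<in> DD"
    and "c = b + Mex DD" "u1 < a" "u2 + 2 \<le> b" "u3 + 3 \<le> c" "u3 - u1 + 2 \<le> c - a"
proof -
  from inv have fin: "finite FF" "finite DD"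
    and u: "u1 < a" "u1 \<le> u2" "u2 - u1 < Mex DD" "u2 \<le> u3" "u3 - u2 \<le> u2 - u1"
    and FF_le: "\<forall>x\<in>FF. x \<le> u3"
    and spaced_D: "spaced_above 2 (Mex DD) DD" and spaced_F: "spaced_above 3 (a + Mex DD) FF"
    unfolding wythoff_inv_def a by auto
  have pos: "0 < Mex DD" using u by linarith
  note second = second_coordinate_bounds[OF fin pos spaced_D spaced_F a b]
  show "Mex DD \<le> b - a" "b - a \<le> Mex DD + 2" using second(1,2) by auto
  show "x \<in> DD" if "Mex DD < x" "x < b - a" for x using second(3) that by auto
  show "u1 < a" by (fact u(1))
  show u2_b: "u2 + 2 \<le> b" using u second(1) by linarith
  have "0 \<in> FF" using mem_of_less_Mex u(1) a by auto
  moreover have "b + Mex DD \<notin> FF" using FF_le u u2_b by fastforce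
  ultimately show c_eq: "c = b + Mex DD" using third_coordinate_eq[OF fin(2) pos] c by simp
  show "u3 + 3 \<le> c" "u3 - u1 + 2 \<le> c - a" using c_eq u second(1) by linarith+
qed

lemma wythoff_inv_next:
  assumes inv: "wythoff_inv FF DD u1 u2 u3"
    and a: "a = Mex FF"
    and b: "b = Mex (plus_set a DD \<union> {1..a} \<union> FF)"
    and c: "c = Mex (plus_set b DD \<union> {1..b} \<union> FF)"
  shows "wythoff_inv (FF \<union> {a, b, c}) (DD \<union> {b - a, c - b, c - a}) a b c"
proof -
  define \<delta> FF' DD' where "\<delta> = Mex DD"
    and "FF' = FF \<union> {a, b, c}" and "DD' = DD \<union> {b - a, c - b, c - a}"
  note bounds = next_triple_bounds[OF assms, folded \<delta>_def]
  from inv have fin: "finite FF" "finite DD"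
    and FF_le: "\<forall>x\<in>FF. x \<le> u3" and DD_le: "\<forall>x\<in>DD. x \<le> u3 - u1"
    and spaced_D: "spaced_above 2 \<delta> DD" and spaced_F: "spaced_above 3 (a + \<delta>) FF"
    unfolding wythoff_inv_def a \<delta>_def by auto
  have fin': "finite FF'" "finite DD'" using fin unfolding FF'_def DD'_def by auto
  have Mex_FF': "a < Mex FF'"
    using fin'(1) mem_of_less_Mex[of _ FF] a
    by (intro less_MexI) (auto simp: FF'_def le_less)
  have Mex_DD': "b - a < Mex DD'"
  proof (intro less_MexI[OF fin'(2)])
    fix y assume "y \<le> b - a"
    then consider "y < \<delta>" | "y = \<delta>" | "\<delta> < y \<and> y < b - a" | "y = b - a" by linarith
    then show "y \<in> DD'"
      using mem_of_less_Mex[of y DD] bounds(3,4) unfolding DD'_def \<delta>_def by cases auto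
  qed
  have "spaced_above 2 (Mex DD') (insert (c - a) DD)"
    using spaced_above_mono[OF _ spaced_D] DD_le bounds(1,8) Mex_DD'
    by (intro spaced_above_insert_top) fastforce+
  then have spaced_D': "spaced_above 2 (Mex DD') DD'"
    using Mex_DD' bounds(1,4) unfolding DD'_def
    by (simp add: insert_commute spaced_above_insert_below)
  have "spaced_above 3 (Mex FF' + Mex DD') (insert c FF)"
    using spaced_above_mono[OF _ spaced_F] FF_le bounds(1,7) Mex_FF' Mex_DD'
    by (intro spaced_above_insert_top) fastforce+
  then have spaced_F': "spaced_above 3 (Mex FF' + Mex DD') FF'"
    using Mex_FF' Mex_DD' bounds(1) unfolding FF'_def
    by (simp add: insert_commute spaced_above_insert_below)
  show ?thesis
    unfolding wythoff_inv_def FF'_def[symmetric] DD'_def[symmetric]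
    using fin' Mex_FF' Mex_DD' spaced_D' spaced_F' bounds FF_le DD_le
    by (auto simp: FF'_def DD'_def)
qed

lemma length_vlist: "length (vlist n) = Suc n"
  by (induction n) auto

lemma nth_vlist: "k \<le> n \<Longrightarrow> vlist n ! k = v k"
proof (induction n)
  case 0
  then show ?case by (simp add: v_def)
next
  case (Suc n)
  then show ?case
    by (cases "k = Suc n") (auto simp: v_def nth_append length_vlist)
qed

lemma set_vlist: "set (vlist n) = v ` {0..n}"
  by (force simp: set_conv_nth length_vlist nth_vlist less_Suc_eq_le)

lemma v_Suc: "v (Suc n) = next_triple (vlist n)"
  by (simp add: v_def nth_append length_vlist)

lemma Fset_vlist: "Fset (vlist n) = F n"
  unfolding F_def Fset_def set_vlist v1_def v2_def v3_def by auto

lemma Dset_vlist: "Dset (vlist n) = D n"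
  unfolding D_def Dset_def set_vlist v1_def v2_def v3_def by auto

lemma v_Suc_components:
  "v1 (Suc n) = Mex (F n)"
  "v2 (Suc n) = Mex (plus_set (v1 (Suc n)) (D n) \<union> {1..v1 (Suc n)} \<union> F n)"
  "v3 (Suc n) = Mex (plus_set (v2 (Suc n)) (D n) \<union> {1..v2 (Suc n)} \<union> F n)"
  unfolding v1_def v2_def v3_def c1_def c2_def c3_def v_Suc next_triple_def Let_def
    Fset_vlist Dset_vlist
  by simp_all

lemma F_Suc: "F (Suc n) = F n \<union> {v1 (Suc n), v2 (Suc n), v3 (Suc n)}"
  unfolding F_def by (auto simp: le_Suc_eq)

lemma D_Suc:
  "D (Suc n) = D n \<union> {v2 (Suc n) - v1 (Suc n), v3 (Suc n) - v2 (Suc n), v3 (Suc n) - v1 (Suc n)}"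
  unfolding D_def by (auto simp: atLeast0_atMost_Suc)

lemma wythoff_inv_v: "wythoff_inv (F n) (D n) (v1 n) (v2 n) (v3 n)"
proof (induction n)
  case 0
  have v0: "v1 0 = 0" "v2 0 = 0" "v3 0 = 0"
    by (simp_all add: v1_def v2_def v3_def v_def c1_def c2_def c3_def)
  then have "F 0 = {0}" "D 0 = {0}"
    unfolding F_def D_def by auto
  moreover have "Mex {0} = 1"
    by (rule Mex_eqI) auto
  ultimately show ?case
    using v0 by (simp add: wythoff_inv_def spaced_above_def)
next
  case (Suc n)
  show ?case
    unfolding F_Suc D_Suc by (rule wythoff_inv_next[OF Suc v_Suc_components])
qed

lemma Max_F: "Max (F n) = v3 n"
  using wythoff_inv_v[of n] by (intro Max_eqI) (auto simp: wythoff_inv_def F_def)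

lemma Max_D: "Max (D n) = v3 n - v1 n"
  using wythoff_inv_v[of n] by (intro Max_eqI) (auto simp: wythoff_inv_def D_def)

theorem theorem3:
  fixes n :: nat
  assumes "n \<ge> 1"
  shows "v1 n - v1 (n-1) \<ge> 1 \<and> v2 n - v2 (n-1) \<ge> 2 \<and> v3 n - v3 (n-1) \<ge> 3
    \<and> v3 n - v1 n \<ge> v3 (n-1) - v1 (n-1) + 2
    \<and> Gap (D (n-1) \<inter> {Mex (D (n-1))..}) \<ge> 2
    \<and> Gap (F (n-1) \<inter> {Mex (F (n-1)) + Mex (D (n-1))..}) \<ge> 3
    \<and> Max (F n) = v3 n \<and> v3 n = v2 n + Mex (D (n-1))
    \<and> Max (D n) = v3 n - v1 n"
proof -
  obtain m where n: "n = Suc m" using assms by (cases n) auto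
  have inv: "wythoff_inv (F m) (D m) (v1 m) (v2 m) (v3 m)"
    by (rule wythoff_inv_v)
  note bounds = next_triple_bounds[OF inv v_Suc_components]
  have "1 \<le> v1 n - v1 m" "2 \<le> v2 n - v2 m" "3 \<le> v3 n - v3 m"
    and "v3 m - v1 m + 2 \<le> v3 n - v1 n"
    using bounds(5-8) unfolding n by linarith+
  moreover have "enat 2 \<le> Gap (D m \<inter> {Mex (D m)..})"
    and "enat 3 \<le> Gap (F m \<inter> {Mex (F m) + Mex (D m)..})"
    using inv by (auto intro: Gap_ge_if_spaced_above simp: wythoff_inv_def)
  ultimately show ?thesis
    using bounds(4) Max_F Max_D unfolding n by (simp add: numeral_eq_enat)
qed

end
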